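(* Let $R$ be a multivariate convex risk measure and $v\in\mathbb{R}^J$. For every $u\in\mathbb{L}^J$, $$\inf\{\alpha\in\mathbb{R}\mid v+\alpha\mathbf{1}\in R(u)\}=\sup\Big\{\gamma^{\mathsf T}\big(\mathbb{E}^\mu[u]-v\big)-\beta(\mu,\gamma)\ \Big|\ \mu\in\mathbb{M}_1^J,\ \gamma\in\mathbb{R}^J_+,\ \gamma^{\mathsf T}\mathbf{1}=1\Big\}.$$
   Context: Probability space: $\Omega=\{1,\dots,I\}$, $I\ge 2$, with probabilities $p_i>0$. $\mathbb{L}^J$ denotes random vectors $u=(u_1,\dots,u_I)$, $u_i\in\mathbb{R}^J$; $u\le v$ means $u_i^j\le v_i^j$ for all $i,j$. $\mathbf{1}=(1,\dots,1)^{\mathsf T}\in\mathbb{R}^J$. A multivariate convex risk measure is a map $R:\mathbb{L}^J\to 2^{\mathbb{R}^J}$ such that: (A1) $u\le v$ implies $R(u)\supseteq R(v)$; (A2) $R(u+z)=R(u)+z$ for all $z\in\mathbb{R}^J$; (A3) $R(u)\notin\{\emptyset,\mathbb{R}^J\}$; (A4) $R(\gamma u+(1-\gamma)v)\supseteq\gamma R(u)+(1-\gamma)R(v)$ for $\gamma\in(0,1)$; (A5) the acceptance set $\mathcal{A}=\{u\in\mathbb{L}^J\mid 0\in R(u)\}$ is closed. $\mathbb{M}_1^J$ denotes the set of $J$-tuples $\mu=(\mu^1,\dots,\mu^J)$ of probability measures on $\Omega$, with $\mu_i=(\mu_i^1,\dots,\mu_i^J)^{\mathsf T}$, and $\mathbb{E}^\mu[u]=\sum_{i\in\Omega}\mu_i\cdot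 u_i$, where $\cdot$ is the componentwise (Hadamard) product. The minimal penalty function is $\beta(\mu,w)=\sup_{u\in\mathcal{A}}w^{\mathsf T}\mathbb{E}^\mu[u]$ for $\mu\in\mathbb{M}_1^J$, $w\in\mathbb{R}^J_+\setminus\{0\}$; it is known that $\inf_{z\in R(u)}w^{\mathsf T}z=\sup_{\mu\in\mathbb{M}_1^J}(w^{\mathsf T}\mathbb{E}^\mu[u]-\beta(\mu,w))$ for all $u$ and $w\in\mathbb{R}^J_+\setminus\{0\}$. *)

theory Defs
  imports "HOL-Analysis.Analysis"
begin

(* Omega = finite type 'i, components {1..J} = finite type 'j.
   A random vector u in L^J is u :: real^'j^'i, with u$i$j = u_i^j. *)

definition rv_le :: "real^'j^'i \<Rightarrow> real^'j^'i \<Rightarrow> bool" where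
  "rv_le u v \<longleftrightarrow> (\<forall>i j. u$i$j \<le> v$i$j)"

definition const_rv :: "real^'j \<Rightarrow> real^'j^'i" where
  "const_rv z = (\<chi> i. z)"

definition acceptance_set :: "(real^'j^'i \<Rightarrow> (real^'j) set) \<Rightarrow> (real^'j^'i) set" where
  "acceptance_set R = {u. 0 \<in> R u}"

definition mv_convex_risk_measure :: "(real^'j^'i \<Rightarrow> (real^'j) set) \<Rightarrow> bool" where
  "mv_convex_risk_measure R \<longleftrightarrow>
     (\<forall>u v. rv_le u v \<longrightarrow> R v \<subseteq> R u) \<and>
     (\<forall>u z. R (u + const_rv z) = (\<lambda>x. x + z) ` R u) \<and>
     (\<forall>u. R u \<noteq> {} \<and> R u \<noteq> UNIV) \<and>
     (\<forall>u v g. 0 < g \<and> g < 1 \<longrightarrow>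
        {g *\<^sub>R a + (1 - g) *\<^sub>R b | a b. a \<in> R u \<and> b \<in> R v}
          \<subseteq> R (g *\<^sub>R u + (1 - g) *\<^sub>R v)) \<and>
     closed (acceptance_set R)"

(* M_1^J: mu$i$j = mu^j({i}); each mu^j is a probability measure on Omega *)
definition M1 :: "(real^'j^'i) set" where
  "M1 = {\<mu>. (\<forall>i j. 0 \<le> \<mu>$i$j) \<and> (\<forall>j. (\<Sum>i\<in>UNIV. \<mu>$i$j) = 1)}"

definition expect :: "real^'j^'i \<Rightarrow> real^'j^'i \<Rightarrow> real^'j" where
  "expect \<mu> u = (\<chi> j. \<Sum>i\<in>UNIV. \<mu>$i$j * u$i$j)"

definition ones :: "real^'j" where
  "ones = (\<chi> j. 1)"

definition penalty :: "(real^'j^'i \<Rightarrow> (real^'j) set) \<Rightarrow> real^'j^'i \<Rightarrow> real^'j \<Rightarrow> ereal" where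
  "penalty R \<mu> w = (SUP u\<in>acceptance_set R. ereal (w \<bullet> expect \<mu> u))"

end

theory Submission imports Defs begin

(* By translation invariance, v + alpha 1 in R(u) means that u - v - alpha 1 lies in the
   acceptance set A, and weak duality is then just the definition of the penalty
   function. Conversely, if u - v - c 1 is not in A, it is strictly separated from
   the closed convex set A by a linear functional; since A is closed under
   decreasing components, the functional is nonnegative, and every nonzero
   nonnegative functional on random vectors is a positive multiple of
   y |-> gamma^T E^mu[y] for some mu in M_1^J and gamma in the simplex.
   This pair has dual value above c. *)

lemma const_rv_add: "const_rv (a + b) = const_rv a + const_rv b"
  by (simp add: const_rv_def vec_eq_iff)

lemma expect_diff: "expect \<mu> (a - b) = expect \<mu> a - expect \<mu> b"
  by (simp add: expect_def vec_eq_iff algebra_simps sum_subtractf)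

lemma expect_const_rv: "\<mu> \<in> M1 \<Longrightarrow> expect \<mu> (const_rv z) = z"
  by (simp add: expect_def const_rv_def vec_eq_iff M1_def flip: sum_distrib_right)

lemma inner_expect_shift:
  assumes "\<mu> \<in> M1" and "\<gamma> \<bullet> ones = 1"
  shows "\<gamma> \<bullet> expect \<mu> (u - const_rv v - const_rv (\<alpha> *\<^sub>R ones)) = \<gamma> \<bullet> (expect \<mu> u - v) - \<alpha>"
  using assms by (simp add: expect_diff expect_const_rv inner_diff_right)

lemma penalty_ge_accepted:
  "y \<in> acceptance_set R \<Longrightarrow> ereal (\<gamma> \<bullet> expect \<mu> y) \<le> penalty R \<mu> \<gamma>"
  unfolding penalty_def by (rule SUP_upper)

lemma mv_convex_risk_measureD:
  assumes "mv_convex_risk_measure R"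
  shows "rv_le u v \<Longrightarrow> R v \<subseteq> R u"
    and "R (u + const_rv z) = (\<lambda>x. x + z) ` R u"
    and "R u \<noteq> {}"
    and "0 < g \<Longrightarrow> g < 1 \<Longrightarrow>
      {g *\<^sub>R a + (1 - g) *\<^sub>R b | a b. a \<in> R u \<and> b \<in> R v} \<subseteq> R (g *\<^sub>R u + (1 - g) *\<^sub>R v)"
    and "closed (acceptance_set R)"
  using assms unfolding mv_convex_risk_measure_def by simp_all

lemma risk_measure_mem_iff:
  assumes "mv_convex_risk_measure R"
  shows "z \<in> R u \<longleftrightarrow> u - const_rv z \<in> acceptance_set R"
proof -
  have "u - const_rv z = u + const_rv (- z)"
    by (simp add: const_rv_def vec_eq_iff)
  then have "R (u - const_rv z) = (\<lambda>x. x + - z) ` R u"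
    by (simp only: mv_convex_risk_measureD(2)[OF assms])
  moreover have "0 \<in> (\<lambda>x. x + - z) ` R u \<longleftrightarrow> z \<in> R u"
    by (auto simp: image_iff)
  ultimately show ?thesis
    unfolding acceptance_set_def by simp
qed

lemma acceptance_set_nonempty:
  assumes "mv_convex_risk_measure R"
  shows "acceptance_set R \<noteq> {}"
proof -
  obtain z where "z \<in> R 0"
    using mv_convex_risk_measureD(3)[OF assms] by blast
  then show ?thesis
    using risk_measure_mem_iff[OF assms] by blast
qed

lemma acceptance_set_downward_closed:
  assumes "mv_convex_risk_measure R"
  shows "\<forall>a\<in>acceptance_set R. \<forall>w. rv_le w a \<longrightarrow> w \<in> acceptance_set R"
  using mv_convex_risk_measureD(1)[OF assms] unfolding acceptance_set_def by blast

lemma convex_acceptance_set: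
  assumes "mv_convex_risk_measure R"
  shows "convex (acceptance_set R)"
proof (rule convexI)
  fix x y and a b :: real
  assume x: "x \<in> acceptance_set R" and y: "y \<in> acceptance_set R"
    and ab: "0 \<le> a" "0 \<le> b" "a + b = 1"
  show "a *\<^sub>R x + b *\<^sub>R y \<in> acceptance_set R"
  proof (cases "a = 0 \<or> b = 0")
    case True
    then show ?thesis using ab x y by auto
  next
    case False
    then have "0 < a" "a < 1" "b = 1 - a"
      using ab by auto
    moreover have "a *\<^sub>R 0 + (1 - a) *\<^sub>R 0 \<in> {a *\<^sub>R p + (1 - a) *\<^sub>R q | p q. p \<in> R x \<and> q \<in> R y}"
      using x y unfolding acceptance_set_def by blast
    ultimately have "0 \<in> R (a *\<^sub>R x + (1 - a) *\<^sub>R y)"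
      using mv_convex_risk_measureD(4)[OF assms] by fastforce
    then show ?thesis
      using \<open>b = 1 - a\<close> unfolding acceptance_set_def by simp
  qed
qed

lemma separating_nonneg_functional:
  fixes A :: "(real^'j::finite^'i::finite) set"
  assumes "convex A" and "closed A" and "A \<noteq> {}" and "x \<notin> A"
    and down: "\<forall>a\<in>A. \<forall>w. rv_le w a \<longrightarrow> w \<in> A"
  obtains n b where "\<And>i j. 0 \<le> n$i$j" and "n \<noteq> 0"
    and "\<And>y. y \<in> A \<Longrightarrow> n \<bullet> y < b" and "b < n \<bullet> x"
proof -
  obtain a c where ac: "a \<bullet> x < c" "\<forall>y\<in>A. c < a \<bullet> y"
    using separating_hyperplane_closed_point[OF assms(1,2,4)] by blast
  define n where "n = - a"
  have below: "n \<bullet> y < - c" if "y \<in> A" for y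
    using ac(2) that unfolding n_def by simp
  have above: "- c < n \<bullet> x"
    using ac(1) unfolding n_def by simp
  obtain a0 where a0: "a0 \<in> A"
    using assms(3) by blast
  have "0 \<le> n$i$j" for i j
  proof (rule ccontr)
    assume neg: "\<not> 0 \<le> n$i$j"
    define E :: "real^'j^'i" where "E = axis i (axis j 1)"
    define t where "t = (- c - n \<bullet> a0) / (- n$i$j)"
    \<comment> \<open>lowering entry (i, j) of a0 by t stays in A but reaches the hyperplane\<close>
    have "t \<ge> 0"
      unfolding t_def using below[OF a0] neg by (intro divide_nonneg_pos) auto
    then have "rv_le (a0 - t *\<^sub>R E) a0"
      unfolding rv_le_def E_def by (simp add: axis_def)
    then have "n \<bullet> (a0 - t *\<^sub>R E) < - c"
      using below down a0 by blast
    moreover have "n \<bullet> E = n$i$j"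
      unfolding E_def by (simp add: inner_axis)
    then have "n \<bullet> (a0 - t *\<^sub>R E) = - c"
      using neg unfolding t_def by (simp add: inner_diff_right inner_add_right field_simps)
    ultimately show False
      by simp
  qed
  moreover have "n \<noteq> 0"
    using below[OF a0] above by auto
  ultimately show thesis
    using that below above by blast
qed

lemma nonneg_functional_eq_scaled_dual_pair:
  fixes n :: "real^'j::finite^'i::finite"
  assumes nonneg: "\<And>i j. 0 \<le> n$i$j" and "n \<noteq> 0"
  obtains \<mu> \<gamma> s where "\<mu> \<in> M1" and "\<forall>j. 0 \<le> \<gamma>$j" and "\<gamma> \<bullet> ones = 1" and "s > 0"
    and "\<And>y. \<gamma> \<bullet> expect \<mu> y = (n \<bullet> y) / s"
proof -
  define N where "N j = (\<Sum>i\<in>UNIV. n$i$j)" for j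
  define s where "s = (\<Sum>j\<in>UNIV. N j)"
  have N_nonneg: "0 \<le> N j" for j
    unfolding N_def by (simp add: nonneg sum_nonneg)
  have N_zero: "N j = 0 \<Longrightarrow> n$i$j = 0" for i j
    unfolding N_def using sum_nonneg_eq_0_iff[of UNIV "\<lambda>i. n$i$j"] nonneg by auto
  obtain i0 j0 where "n$i0$j0 \<noteq> 0"
    using \<open>n \<noteq> 0\<close> by (metis vec_eq_iff zero_index)
  then have "N j0 > 0"
    using N_zero N_nonneg[of j0] by force
  then have s_pos: "s > 0"
    unfolding s_def using sum_pos2[of UNIV j0 N] N_nonneg by auto
  define \<gamma> :: "real^'j" where "\<gamma> = (\<chi> j. N j / s)"
  \<comment> \<open>columns with N j = 0 carry no weight; any probability measure will do there\<close>
  define \<mu> :: "real^'j^'i" where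
    "\<mu> = (\<chi> i j. if N j = 0 then 1 / real CARD('i) else n$i$j / N j)"
  have \<mu>: "\<mu> \<in> M1"
    unfolding M1_def
  proof (intro CollectI conjI allI)
    fix i j
    show "0 \<le> \<mu>$i$j"
      unfolding \<mu>_def using nonneg N_nonneg by simp
  next
    fix j
    show "(\<Sum>i\<in>UNIV. \<mu>$i$j) = 1"
      by (cases "N j = 0") (simp_all add: \<mu>_def N_def flip: sum_divide_distrib)
  qed
  have \<gamma>_nonneg: "\<forall>j. 0 \<le> \<gamma>$j"
    unfolding \<gamma>_def using N_nonneg s_pos by simp
  have \<gamma>_ones: "\<gamma> \<bullet> ones = 1"
    unfolding \<gamma>_def ones_def inner_vec_def using s_pos by (simp add: s_def flip: sum_divide_distrib)
  have scaled: "\<gamma> \<bullet> expect \<mu> y = (n \<bullet> y) / s" for y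
  proof -
    have weight: "\<gamma>$j * \<mu>$i$j = n$i$j / s" for i j
      using N_zero unfolding \<gamma>_def \<mu>_def by auto
    have "\<gamma> \<bullet> expect \<mu> y = (\<Sum>j\<in>UNIV. \<Sum>i\<in>UNIV. (\<gamma>$j * \<mu>$i$j) * y$i$j)"
      unfolding inner_vec_def expect_def by (simp add: sum_distrib_left mult.assoc)
    also have "\<dots> = (\<Sum>j\<in>UNIV. \<Sum>i\<in>UNIV. n$i$j * y$i$j / s)"
      by (simp add: weight)
    also have "\<dots> = (\<Sum>i\<in>UNIV. \<Sum>j\<in>UNIV. n$i$j * y$i$j) / s"
      by (subst sum.swap) (simp add: sum_divide_distrib)
    finally show ?thesis
      by (simp add: inner_vec_def)
  qed
  show thesis
    by (rule that[OF \<mu> \<gamma>_nonneg \<gamma>_ones s_pos scaled])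
qed

lemma mem_risk_shift_iff:
  assumes "mv_convex_risk_measure R"
  shows "v + \<alpha> *\<^sub>R ones \<in> R u \<longleftrightarrow>
         u - const_rv v - const_rv (\<alpha> *\<^sub>R ones) \<in> acceptance_set R"
  by (simp add: risk_measure_mem_iff[OF assms] const_rv_add diff_diff_eq)

lemma dual_value_le_if_mem:
  assumes "mv_convex_risk_measure R" and "\<mu> \<in> M1" and "\<gamma> \<bullet> ones = 1"
    and "v + \<alpha> *\<^sub>R ones \<in> R u"
  shows "ereal (\<gamma> \<bullet> (expect \<mu> u - v)) - penalty R \<mu> \<gamma> \<le> ereal \<alpha>"
proof -
  have "ereal (\<gamma> \<bullet> expect \<mu> (u - const_rv v - const_rv (\<alpha> *\<^sub>R ones))) \<le> penalty R \<mu> \<gamma>"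
    using assms(1,4) by (simp add: mem_risk_shift_iff penalty_ge_accepted)
  then have "ereal (\<gamma> \<bullet> (expect \<mu> u - v) - \<alpha>) \<le> penalty R \<mu> \<gamma>"
    by (simp only: inner_expect_shift[OF assms(2,3)])
  then show ?thesis
    by (cases "penalty R \<mu> \<gamma>") auto
qed

lemma dual_value_gt_if_not_mem:
  assumes R: "mv_convex_risk_measure R" and "v + c *\<^sub>R ones \<notin> R u"
  obtains \<mu> \<gamma> where "\<mu> \<in> M1" and "\<forall>j. 0 \<le> \<gamma>$j" and "\<gamma> \<bullet> ones = 1"
    and "ereal c < ereal (\<gamma> \<bullet> (expect \<mu> u - v)) - penalty R \<mu> \<gamma>"
proof -
  define x where "x = u - const_rv v - const_rv (c *\<^sub>R ones)"
  have "x \<notin> acceptance_set R"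
    using assms unfolding x_def by (simp add: mem_risk_shift_iff)
  obtain n b where nonneg: "\<And>i j. 0 \<le> n$i$j" and "n \<noteq> 0"
    and below: "\<And>y. y \<in> acceptance_set R \<Longrightarrow> n \<bullet> y < b" and above: "b < n \<bullet> x"
    using separating_nonneg_functional[OF convex_acceptance_set[OF R] mv_convex_risk_measureD(5)[OF R]
        acceptance_set_nonempty[OF R] \<open>x \<notin> acceptance_set R\<close>
        acceptance_set_downward_closed[OF R]]
    by blast
  obtain \<mu> \<gamma> s where \<mu>: "\<mu> \<in> M1" and \<gamma>: "\<forall>j. 0 \<le> \<gamma>$j" "\<gamma> \<bullet> ones = 1" and "s > 0"
    and scaled: "\<And>y. \<gamma> \<bullet> expect \<mu> y = (n \<bullet> y) / s"
    using nonneg_functional_eq_scaled_dual_pair[OF nonneg \<open>n \<noteq> 0\<close>] by blast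
  have "penalty R \<mu> \<gamma> \<le> ereal (b / s)"
    unfolding penalty_def
  proof (rule SUP_least)
    fix y
    assume "y \<in> acceptance_set R"
    then show "ereal (\<gamma> \<bullet> expect \<mu> y) \<le> ereal (b / s)"
      using below \<open>s > 0\<close> by (simp add: scaled divide_right_mono less_imp_le)
  qed
  moreover have "b / s < \<gamma> \<bullet> (expect \<mu> u - v) - c"
  proof -
    have "b / s < (n \<bullet> x) / s"
      using above \<open>s > 0\<close> by (simp add: divide_strict_right_mono)
    also have "\<dots> = \<gamma> \<bullet> (expect \<mu> u - v) - c"
      unfolding x_def scaled[symmetric] by (rule inner_expect_shift[OF \<mu> \<gamma>(2)])
    finally show ?thesis .
  qed
  ultimately have "ereal c < ereal (\<gamma> \<bullet> (expect \<mu> u - v)) - penalty R \<mu> \<gamma>"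
    by (cases "penalty R \<mu> \<gamma>") auto
  then show thesis
    by (rule that[OF \<mu> \<gamma>])
qed

lemma ereal_Inf_le_SupI:
  fixes S :: "ereal set"
  assumes "\<And>c. \<not> P c \<Longrightarrow> \<exists>s\<in>S. ereal c < s"
  shows "Inf {ereal \<alpha> | \<alpha>. P \<alpha>} \<le> Sup S"
proof (rule ccontr)
  assume "\<not> Inf {ereal \<alpha> | \<alpha>. P \<alpha>} \<le> Sup S"
  then obtain c where "Sup S < ereal c" and c_below: "ereal c < Inf {ereal \<alpha> | \<alpha>. P \<alpha>}"
    using ereal_dense2 not_le by meson
  have "\<not> P c"
  proof
    assume "P c"
    then have "Inf {ereal \<alpha> | \<alpha>. P \<alpha>} \<le> ereal c"
      by (blast intro: Inf_lower)
    with c_below show False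
      by simp
  qed
  then obtain s where "s \<in> S" and "ereal c < s"
    using assms by blast
  then have "ereal c < Sup S"
    using Sup_upper less_le_trans by blast
  with \<open>Sup S < ereal c\<close> show False
    by simp
qed

theorem lemma5p5:
  fixes p :: "'i::finite \<Rightarrow> real"
    and R :: "real^'j::finite^'i \<Rightarrow> (real^'j) set"
    and v :: "real^'j"
    and u :: "real^'j^'i"
  assumes "CARD('i) \<ge> 2"
    and "\<And>i. p i > 0"
    and "(\<Sum>i\<in>UNIV. p i) = 1"
    and "mv_convex_risk_measure R"
  shows "Inf {ereal \<alpha> | \<alpha>. v + \<alpha> *\<^sub>R ones \<in> R u}
       = Sup {ereal (\<gamma> \<bullet> (expect \<mu> u - v)) - penalty R \<mu> \<gamma> | \<mu> \<gamma>.
                \<mu> \<in> M1 \<and> (\<forall>j. 0 \<le> \<gamma>$j) \<and> \<gamma> \<bullet> ones = 1}"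
    (is "Inf ?T = Sup ?S")
proof (rule antisym)
  show "Sup ?S \<le> Inf ?T"
  proof (intro Sup_least Inf_greatest)
    fix s t
    assume "s \<in> ?S" and "t \<in> ?T"
    from \<open>s \<in> ?S\<close> obtain \<mu> \<gamma> where "\<mu> \<in> M1" "\<gamma> \<bullet> ones = 1"
      and s: "s = ereal (\<gamma> \<bullet> (expect \<mu> u - v)) - penalty R \<mu> \<gamma>"
      by blast
    from \<open>t \<in> ?T\<close> obtain \<alpha> where "v + \<alpha> *\<^sub>R ones \<in> R u" and t: "t = ereal \<alpha>"
      by blast
    show "s \<le> t"
      unfolding s t by (rule dual_value_le_if_mem) fact+
  qed
  show "Inf ?T \<le> Sup ?S"
  proof (rule ereal_Inf_le_SupI)
    fix c
    assume "v + c *\<^sub>R ones \<notin> R u"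
    then obtain \<mu> \<gamma> where "\<mu> \<in> M1" "\<forall>j. 0 \<le> \<gamma>$j" "\<gamma> \<bullet> ones = 1"
      and gt: "ereal c < ereal (\<gamma> \<bullet> (expect \<mu> u - v)) - penalty R \<mu> \<gamma>"
      using dual_value_gt_if_not_mem[OF assms(4)] by blast
    have "ereal (\<gamma> \<bullet> (expect \<mu> u - v)) - penalty R \<mu> \<gamma> \<in> ?S"
      using \<open>\<mu> \<in> M1\<close> \<open>\<forall>j. 0 \<le> \<gamma>$j\<close> \<open>\<gamma> \<bullet> ones = 1\<close> by blast
    with gt show "\<exists>s\<in>?S. ereal c < s"
      by blast
  qed
qed

end
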